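(* Let $X$ be a Tychonoff space. Then for every closed discrete set $D\subset X$ we have $|D|\le\chi((C(X),\tau_\Gamma))$, where $|D|$ is the cardinality of $D$ and $\chi$ denotes the character of the space.
   Context: $C(X)$ is the set of continuous real-valued functions on $X$, each identified with its graph in $X\times\mathbb{R}$. The graph topology $\tau_\Gamma$ on $C(X)$ has base $\{F_G: G\text{ open in }X\times\mathbb{R}\}$ where $F_G=\{f\in C(X): f\subset G\}$. The character $\chi$ of a space is the supremum over its points of the minimal cardinality of a neighbourhood base at the point (an infinite cardinal). *)

theory Defs
  imports "HOL-Analysis.Analysis"
begin

definition tychonoff_space :: "'a topology \<Rightarrow> bool" where
  "tychonoff_space X \<longleftrightarrow> completely_regular_space X \<and> t1_space X"

definition graph_of :: "'a topology \<Rightarrow> ('a \<Rightarrow> real) \<Rightarrow> ('a \<times> real) set" where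
  "graph_of X f = {(x, f x) | x. x \<in> topspace X}"

text \<open>C(X): continuous real-valued functions on X, each identified with its graph.\<close>
definition CX :: "'a topology \<Rightarrow> ('a \<times> real) set set" where
  "CX X = {graph_of X f | f. continuous_map X euclideanreal f}"

definition graph_basic :: "'a topology \<Rightarrow> ('a \<times> real) set \<Rightarrow> ('a \<times> real) set set" where
  "graph_basic X G = {f \<in> CX X. f \<subseteq> G}"

definition graph_topology :: "'a topology \<Rightarrow> ('a \<times> real) set topology" where
  "graph_topology X = topology (\<lambda>U. U \<subseteq> CX X \<and>
     (\<forall>f\<in>U. \<exists>G. openin (prod_topology X euclideanreal) G \<and> f \<in> graph_basic X G \<and> graph_basic X G \<subseteq> U))"

definition nbhd_base :: "'a topology \<Rightarrow> 'a \<Rightarrow> 'a set set \<Rightarrow> bool" where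
  "nbhd_base T p B \<longleftrightarrow> (\<forall>V\<in>B. openin T V \<and> p \<in> V) \<and>
     (\<forall>U. openin T U \<and> p \<in> U \<longrightarrow> (\<exists>V\<in>B. V \<subseteq> U))"

text \<open>character_le T K: the character of T (an infinite cardinal, the supremum over
  points of the least size of a neighbourhood base) is at most |K|.\<close>
definition character_le :: "'a topology \<Rightarrow> 'k set \<Rightarrow> bool" where
  "character_le T K \<longleftrightarrow> infinite K \<and>
     (\<forall>p\<in>topspace T. \<exists>B. nbhd_base T p B \<and> ordLeq2 (card_of B) (card_of K))"

end

theory Submission
  imports Defs
begin

text \<open>Every neighbourhood base B at the zero function is strictly larger than D. Suppose
  h injects B into D. Complete regularity gives, inside each V \<in> B, a function g_V with
  g_V(h V) \<noteq> 0. The points (h V, g_V(h V)) lie over the closed discrete set h ` B, hence form a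
  closed subset of X \<times> \<real> missing the graph of 0; its complement G yields the neighbourhood F_G
  of 0, which contains no V \<in> B since g_V \<in> V leaves G at h V.\<close>

lemma openin_graph_topology:
  "openin (graph_topology X) U \<longleftrightarrow> U \<subseteq> CX X \<and>
     (\<forall>f\<in>U. \<exists>G. openin (prod_topology X euclideanreal) G \<and> f \<in> graph_basic X G \<and> graph_basic X G \<subseteq> U)"
  (is "_ \<longleftrightarrow> ?open U")
proof -
  have "istopology ?open"
    unfolding istopology_def
  proof (intro conjI allI impI ballI)
    fix S T f
    assume S: "?open S" and T: "?open T"
    then show "S \<inter> T \<subseteq> CX X" by blast
    assume "f \<in> S \<inter> T"
    then obtain G1 G2 where "openin (prod_topology X euclideanreal) G1" "f \<in> graph_basic X G1" "graph_basic X G1 \<subseteq> S"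
      and "openin (prod_topology X euclideanreal) G2" "f \<in> graph_basic X G2" "graph_basic X G2 \<subseteq> T"
      using S T by blast
    then show "\<exists>G. openin (prod_topology X euclideanreal) G \<and> f \<in> graph_basic X G \<and> graph_basic X G \<subseteq> S \<inter> T"
      by (intro exI[of _ "G1 \<inter> G2"]) (auto simp: graph_basic_def)
  next
    fix \<K> f
    assume \<K>: "\<forall>S\<in>\<K>. ?open S"
    then show "\<Union>\<K> \<subseteq> CX X" by blast
    assume "f \<in> \<Union>\<K>"
    then obtain S where "S \<in> \<K>" "f \<in> S" by blast
    then obtain G where "openin (prod_topology X euclideanreal) G" "f \<in> graph_basic X G" "graph_basic X G \<subseteq> S"
      using \<K> by meson
    then show "\<exists>G. openin (prod_topology X euclideanreal) G \<and> f \<in> graph_basic X G \<and> graph_basic X G \<subseteq> \<Union>\<K>"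
      using \<open>S \<in> \<K>\<close> by blast
  qed
  then show ?thesis
    unfolding graph_topology_def by (simp add: topology_inverse')
qed

lemma openin_graph_basic:
  "openin (prod_topology X euclideanreal) G \<Longrightarrow> openin (graph_topology X) (graph_basic X G)"
  unfolding openin_graph_topology by (auto simp: graph_basic_def)

lemma graph_of_in_CX: "continuous_map X euclideanreal f \<Longrightarrow> graph_of X f \<in> CX X"
  unfolding CX_def by blast

lemma graph_of_zero_in_topspace: "graph_of X (\<lambda>_. 0) \<in> topspace (graph_topology X)"
proof -
  have "openin (prod_topology X euclideanreal) (topspace X \<times> UNIV)"
    by (simp add: openin_prod_Times_iff)
  moreover have "graph_of X (\<lambda>_. 0) \<in> graph_basic X (topspace X \<times> UNIV)"
    by (auto simp: graph_basic_def graph_of_def CX_def)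
  ultimately show ?thesis
    using openin_graph_basic openin_subset by blast
qed

lemma zero_graph_open_nbhd_contains_nonzero_graph:
  assumes "completely_regular_space X"
    and G: "openin (prod_topology X euclideanreal) G"
    and zero: "graph_of X (\<lambda>_. 0) \<subseteq> G"
    and d: "d \<in> topspace X"
  obtains g where "continuous_map X euclideanreal g" "graph_of X g \<subseteq> G" "g d \<noteq> 0"
proof -
  have "(d, 0) \<in> G" using zero d by (auto simp: graph_of_def)
  then have "\<exists>U W. openin X U \<and> openin euclideanreal W \<and> d \<in> U \<and> (0::real) \<in> W \<and> U \<times> W \<subseteq> G"
    by (rule openin_prod_topology_alt[THEN iffD1, OF G, rule_format])
  then obtain U W where U: "openin X U" and "open W" "d \<in> U" "0 \<in> W" and UW: "U \<times> W \<subseteq> G"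
    by auto
  then obtain e :: real where e: "e > 0" "ball 0 e \<subseteq> W"
    using open_contains_ball by blast
  have "closedin X (topspace X - U)"
    using U by blast
  then obtain f :: "'a \<Rightarrow> real" where f: "continuous_map X (top_of_set {0..1}) f" "f d = 0" "f ` (topspace X - U) \<subseteq> {1}"
    using assms(1)[unfolded completely_regular_space_def, rule_format, of "topspace X - U" d] d \<open>d \<in> U\<close>
    by blast
  define g where "g x = e/2 * (1 - f x)" for x
  have f01: "f x \<in> {0..1}" if "x \<in> topspace X" for x
    using continuous_map_image_subset_topspace[OF f(1)] that by auto
  show thesis
  proof
    show "continuous_map X euclideanreal g"
      unfolding g_def using f(1) by (intro continuous_intros) (simp add: continuous_map_in_subtopology)
    show "graph_of X g \<subseteq> G"
    proof (clarsimp simp: graph_of_def)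
      fix x assume x: "x \<in> topspace X"
      show "(x, g x) \<in> G"
      proof (cases "x \<in> U")
        case True
        have "\<bar>g x\<bar> < e"
          using f01[OF x] e(1) by (simp add: g_def abs_mult)
        then have "g x \<in> W"
          using e(2) by (auto simp: dist_real_def)
        then show ?thesis using True UW by blast
      next
        case False
        then have "g x = 0" using f(3) x by (auto simp: g_def)
        then show ?thesis using zero x by (auto simp: graph_of_def)
      qed
    qed
    show "g d \<noteq> 0" using f(2) e by (simp add: g_def)
  qed
qed

lemma graph_topology_nbhd_of_zero_contains_nonzero:
  assumes "completely_regular_space X"
    and "openin (graph_topology X) V" "graph_of X (\<lambda>_. 0) \<in> V"
    and "d \<in> topspace X"
  obtains g where "continuous_map X euclideanreal g" "graph_of X g \<in> V" "g d \<noteq> 0"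
proof -
  obtain G where G: "openin (prod_topology X euclideanreal) G"
      "graph_of X (\<lambda>_. 0) \<in> graph_basic X G" "graph_basic X G \<subseteq> V"
    using assms(2,3) unfolding openin_graph_topology by blast
  then obtain g where "continuous_map X euclideanreal g" "graph_of X g \<subseteq> G" "g d \<noteq> 0"
    using zero_graph_open_nbhd_contains_nonzero_graph[OF assms(1) G(1) _ assms(4)] by (auto simp: graph_basic_def)
  moreover from this have "graph_of X g \<in> graph_basic X G"
    unfolding graph_basic_def using graph_of_in_CX by blast
  ultimately show thesis
    using that G(3) by blast
qed

lemma closedin_discrete_subset:
  assumes "closedin X D" "subtopology X D = discrete_topology D" "S \<subseteq> D"
  shows "closedin X S" "subtopology X S = discrete_topology S"
proof -
  have "closedin (subtopology X D) S"
    using assms(2,3) by simp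
  then show "closedin X S"
    using assms(1) closedin_trans_full by blast
  have "subtopology X S = subtopology (subtopology X D) S"
    using assms(3) by (simp add: subtopology_subtopology Int_absorb1)
  then show "subtopology X S = discrete_topology S"
    using assms(2,3) by (simp add: Int_absorb1)
qed

lemma closedin_graph_on_closed_discrete:
  fixes \<phi> :: "'a \<Rightarrow> real"
  assumes "closedin X D" "subtopology X D = discrete_topology D"
  shows "closedin (prod_topology X euclideanreal) ((\<lambda>x. (x, \<phi> x)) ` D)"
proof -
  have "continuous_map (prod_topology (discrete_topology D) euclideanreal) euclideanreal
      (\<lambda>p. snd p - \<phi> (fst p))"
    by (intro continuous_intros continuous_map_compose[OF continuous_map_fst, unfolded o_def]) simp_all
  then have "closedin (prod_topology (discrete_topology D) euclideanreal)
      {p \<in> D \<times> UNIV. snd p - \<phi> (fst p) \<in> {0}}"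
    by (auto dest: closedin_continuous_map_preimage[of _ _ _ "{0}"])
  moreover have "{p \<in> D \<times> UNIV. snd p - \<phi> (fst p) \<in> {0}} = (\<lambda>x. (x, \<phi> x)) ` D"
    by auto
  moreover have "subtopology (prod_topology X euclideanreal) (D \<times> UNIV) = prod_topology (discrete_topology D) euclideanreal"
    using assms(2) by (simp add: subtopology_Times)
  moreover have "closedin (prod_topology X euclideanreal) (D \<times> UNIV)"
    using assms(1) by (simp add: closedin_prod_Times_iff)
  ultimately show ?thesis
    using closedin_trans_full by metis
qed

lemma card_of_closed_discrete_less_nbhd_base_graph_zero:
  assumes X: "completely_regular_space X"
    and D: "closedin X D" "subtopology X D = discrete_topology D"
    and B: "nbhd_base (graph_topology X) (graph_of X (\<lambda>_. 0)) B"
  shows "ordLess2 (card_of D) (card_of B)"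
  unfolding card_of_ordLess[symmetric]
proof
  assume "\<exists>h. inj_on h B \<and> h ` B \<subseteq> D"
  then obtain h where h: "inj_on h B" "h ` B \<subseteq> D" by blast
  have "\<exists>g. continuous_map X euclideanreal g \<and> graph_of X g \<in> V \<and> g (h V) \<noteq> 0" if "V \<in> B" for V
  proof -
    have "openin (graph_topology X) V" "graph_of X (\<lambda>_. 0) \<in> V"
      using B that unfolding nbhd_base_def by auto
    moreover have "h V \<in> topspace X"
      using that h(2) closedin_subset[OF D(1)] by blast
    ultimately obtain g where "continuous_map X euclideanreal g" "graph_of X g \<in> V" "g (h V) \<noteq> 0"
      by (rule graph_topology_nbhd_of_zero_contains_nonzero[OF X])
    then show ?thesis by blast
  qed
  then obtain g where g: "\<And>V. V \<in> B \<Longrightarrow>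
      continuous_map X euclideanreal (g V) \<and> graph_of X (g V) \<in> V \<and> g V (h V) \<noteq> 0"
    by metis
  \<comment> \<open>the diagonal points, as the graph over h ` B of x \<mapsto> g_V x with V = the h-preimage of x\<close>
  define P where "P = (\<lambda>x. (x, g (inv_into B h x) x)) ` h ` B"
  have "closedin (prod_topology X euclideanreal) P"
    unfolding P_def using closedin_discrete_subset[OF D h(2)] by (intro closedin_graph_on_closed_discrete)
  then have "openin (prod_topology X euclideanreal) (topspace X \<times> UNIV - P)"
    unfolding closedin_def by simp
  moreover have "graph_of X (\<lambda>_. 0) \<in> graph_basic X (topspace X \<times> UNIV - P)"
    using g h(1) graph_of_in_CX[of X "\<lambda>_. 0"] by (auto simp: graph_basic_def graph_of_def P_def)
  ultimately obtain V where V: "V \<in> B" "V \<subseteq> graph_basic X (topspace X \<times> UNIV - P)"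
    using B openin_graph_basic unfolding nbhd_base_def by blast
  then have "graph_of X (g V) \<subseteq> topspace X \<times> UNIV - P"
    using g unfolding graph_basic_def by blast
  moreover have "(h V, g V (h V)) \<in> graph_of X (g V)"
    using V(1) h(2) closedin_subset[OF D(1)] unfolding graph_of_def by blast
  moreover have "(h V, g V (h V)) \<in> P"
    using V(1) h(1) unfolding P_def by force
  ultimately show False by blast
qed

theorem theorem3p1:
  fixes X :: "'a topology" and D :: "'a set"
  assumes "tychonoff_space X"
    and "closedin X D"
    and "subtopology X D = discrete_topology D"
  shows "\<forall>K :: 'k set. character_le (graph_topology X) K \<longrightarrow> ordLeq2 (card_of D) (card_of K)"
proof (intro allI impI)
  fix K :: "'k set"
  assume "character_le (graph_topology X) K"
  then obtain B where B: "nbhd_base (graph_topology X) (graph_of X (\<lambda>_. 0)) B" "ordLeq2 (card_of B) (card_of K)"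
    using graph_of_zero_in_topspace unfolding character_le_def by blast
  have "ordLess2 (card_of D) (card_of B)"
    using card_of_closed_discrete_less_nbhd_base_graph_zero assms B(1) tychonoff_space_def by blast
  then show "ordLeq2 (card_of D) (card_of K)"
    using B(2) ordLess_imp_ordLeq ordLess_ordLeq_trans by blast
qed

end
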